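(* Let $\mathcal A$ be a finite alphabet. A map $\mu:\mathcal S_\infty\to[0,\infty]$ with $\mu(\emptyset)=0$ is $\sigma$-additive (hence a pre-measure) if and only if for all $u\in\mathcal A^*$: $$\mu(C_\infty(u))=\mu(\{u\})+\sum_{a\in\mathcal A}\mu(C_\infty(ua)).$$
   Context: $\mathcal A^*,\mathcal A^\omega$: finite/infinite words; $\mathcal A^\infty=\mathcal A^*\cup\mathcal A^\omega$; $\sqsubseteq$ prefix; $C_\infty(u)=\{v\in\mathcal A^\infty:u\sqsubseteq v\}$; $\mathcal S_\infty=\{\emptyset\}\cup\{\{u\}:u\in\mathcal A^*\}\cup\{C_\infty(u):u\in\mathcal A^*\}$. $\sigma$-additive means: for every sequence of pairwise disjoint $S_n\in\mathcal S_\infty$ with $\bigcup_nS_n\in\mathcal S_\infty$, $\mu(\bigcup_nS_n)=\sum_n\mu(S_n)$. *)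

theory Defs
  imports "HOL-Analysis.Analysis"
begin

datatype 'a infword = Fin "'a list" | Inf "nat \<Rightarrow> 'a"

fun fprefix :: "'a list \<Rightarrow> 'a infword \<Rightarrow> bool" where
  "fprefix u (Fin w) \<longleftrightarrow> (\<exists>z. w = u @ z)"
| "fprefix u (Inf f) \<longleftrightarrow> (\<forall>i < length u. f i = u ! i)"

definition Cinf :: "'a list \<Rightarrow> 'a infword set" where
  "Cinf u = {v. fprefix u v}"

definition Sinf :: "'a infword set set" where
  "Sinf = {{}} \<union> {{Fin u} | u. True} \<union> {Cinf u | u. True}"

end

theory Submission
  imports Defs
begin

text \<open>Necessity: \<open>C\<^sub>\<infinity>(u)\<close> is the disjoint union of \<open>{u}\<close> and the finitely many
  \<open>C\<^sub>\<infinity>(ua)\<close>. Sufficiency has two ingredients. First, iterating the identity shows that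
  \<open>\<mu>\<close> is additive on finite partitions of a cylinder into members of \<open>S\<^sub>\<infinity>\<close>: a
  non-trivial such partition contains \<open>{u}\<close> and splits into partitions of the child cylinders,
  each with fewer pieces. Second, a countable partition of a member of \<open>S\<^sub>\<infinity>\<close> into members
  of \<open>S\<^sub>\<infinity>\<close> has only finitely many non-empty pieces. Padding finite words with \<open>None\<close>
  embeds \<open>A\<^sup>\<infinity>\<close> as a closed subset of the compact space \<open>(A \<union> {None})\<^sup>\<omega>\<close>; there every
  member of \<open>S\<^sub>\<infinity>\<close> has compact image and is the trace of an open set, so finitely many
  pieces already cover the union and disjointness forces all others to be empty.\<close>

lemma countably_additive_finite_family:
  fixes \<mu> :: "'a set \<Rightarrow> ennreal" and A :: "'i \<Rightarrow> 'a set"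
  assumes ca: "countably_additive M \<mu>" and "\<mu> {} = 0" "{} \<in> M"
    and I: "finite I" "A ` I \<subseteq> M" "disjoint_family_on A I" "(\<Union>i\<in>I. A i) \<in> M"
  shows "\<mu> (\<Union>i\<in>I. A i) = (\<Sum>i\<in>I. \<mu> (A i))"
proof -
  obtain h where h: "bij_betw h {..<card I} I"
    using ex_bij_betw_nat_finite[OF I(1)] by (auto simp: atLeast0LessThan)
  define B where "B n = (if n < card I then A (h n) else {})" for n
  have "B m \<inter> B n = {}" if "m \<noteq> n" for m n
  proof (cases "m < card I \<and> n < card I")
    case True
    then have "h m \<noteq> h n" "h m \<in> I" "h n \<in> I"
      using h that by (auto simp: bij_betw_def inj_on_def)
    then show ?thesis using I(3) True by (simp add: B_def disjoint_family_on_def)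
  qed (auto simp: B_def)
  then have disj: "disjoint_family B" by (simp add: disjoint_family_on_def)
  have "(\<Union>n. B n) = (\<Union>n<card I. A (h n))"
    by (auto simp: B_def)
  also have "\<dots> = (\<Union>i\<in>I. A i)"
    by (metis bij_betw_imp_surj_on h image_image)
  finally have union: "(\<Union>n. B n) = (\<Union>i\<in>I. A i)" .
  have "range B \<subseteq> M"
    using I(2) \<open>{} \<in> M\<close> h by (auto simp: B_def bij_betw_def)
  then have "(\<Sum>n. \<mu> (B n)) = \<mu> (\<Union>i\<in>I. A i)"
    using ca disj union I(4) unfolding countably_additive_def by metis
  moreover have "(\<Sum>n. \<mu> (B n)) = (\<Sum>n<card I. \<mu> (A (h n)))"
    by (subst suminf_finite[of "{..<card I}"]) (auto simp: B_def \<open>\<mu> {} = 0\<close>)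
  moreover have "\<dots> = (\<Sum>i\<in>I. \<mu> (A i))"
    using h by (rule sum.reindex_bij_betw)
  ultimately show ?thesis by simp
qed

lemma countably_additiveI_finite_support:
  fixes \<mu> :: "'a set \<Rightarrow> ennreal"
  assumes "\<mu> {} = 0"
    and finite_support: "\<And>A :: nat \<Rightarrow> 'a set. range A \<subseteq> M \<Longrightarrow> disjoint_family A \<Longrightarrow>
      (\<Union>i. A i) \<in> M \<Longrightarrow> finite {n. A n \<noteq> {}}"
    and finitely_additive: "\<And>P. finite P \<Longrightarrow> P \<subseteq> M \<Longrightarrow> {} \<notin> P \<Longrightarrow> disjoint P \<Longrightarrow>
      \<Union>P \<in> M \<Longrightarrow> \<mu> (\<Union>P) = (\<Sum>X\<in>P. \<mu> X)"
  shows "countably_additive M \<mu>"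
proof (rule countably_additiveI)
  fix A :: "nat \<Rightarrow> 'a set"
  assume A: "range A \<subseteq> M" "disjoint_family A" "(\<Union>i. A i) \<in> M"
  define S where "S = {n. A n \<noteq> {}}"
  have S: "finite S" using finite_support[OF A] by (simp add: S_def)
  have union: "\<Union>(A ` S) = (\<Union>i. A i)" by (auto simp: S_def)
  have "inj_on A S"
    using A(2) by (auto simp: S_def inj_on_def disjoint_family_on_def)
  have "(\<Sum>i. \<mu> (A i)) = (\<Sum>n\<in>S. \<mu> (A n))"
    by (rule suminf_finite[OF S]) (simp add: S_def \<open>\<mu> {} = 0\<close>)
  also have "\<dots> = (\<Sum>X\<in>A ` S. \<mu> X)"
    using \<open>inj_on A S\<close> by (simp add: sum.reindex)
  also have "\<dots> = \<mu> (\<Union>(A ` S))"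
  proof (rule finitely_additive[symmetric])
    show "disjoint (A ` S)"
      using A(2) by (intro disjoint_family_on_disjoint_image) (simp add: disjoint_family_on_def)
  qed (use A S union in \<open>auto simp: S_def\<close>)
  finally show "(\<Sum>i. \<mu> (A i)) = \<mu> (\<Union>i. A i)" by (simp add: union)
qed

lemma Cinf_Fin [simp]: "Fin w \<in> Cinf u \<longleftrightarrow> (\<exists>z. w = u @ z)"
  by (simp add: Cinf_def)

lemma Cinf_Inf [simp]: "Inf f \<in> Cinf u \<longleftrightarrow> (\<forall>i<length u. f i = u ! i)"
  by (simp add: Cinf_def)

lemma Sinf_iff: "X \<in> Sinf \<longleftrightarrow> X = {} \<or> (\<exists>u. X = {Fin u}) \<or> (\<exists>u. X = Cinf u)"
  by (auto simp: Sinf_def)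

fun seq_of_word :: "'a infword \<Rightarrow> nat \<Rightarrow> 'a option" where
  "seq_of_word (Fin w) i = (if i < length w then Some (w ! i) else None)"
| "seq_of_word (Inf f) i = Some (f i)"

definition prefix_cyl :: "'b list \<Rightarrow> (nat \<Rightarrow> 'b) set" where
  "prefix_cyl xs = {g. \<forall>i<length xs. g i = xs ! i}"

lemma prefix_cyl_snoc: "prefix_cyl (xs @ [c]) = prefix_cyl xs \<inter> {g. g (length xs) = c}"
  by (auto simp: prefix_cyl_def nth_append less_Suc_eq)

lemma seq_of_word_in_prefix_cyl:
  "seq_of_word x \<in> prefix_cyl (map Some v) \<longleftrightarrow> x \<in> Cinf v"
proof (cases x)
  case (Fin w)
  have "(\<forall>i<length v. i < length w \<and> w ! i = v ! i) \<longleftrightarrow> (\<exists>z. w = v @ z)"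
  proof
    assume agree: "\<forall>i<length v. i < length w \<and> w ! i = v ! i"
    then have "length v \<le> length w"
      using agree[rule_format, of "length w"] by (cases "length v \<le> length w") auto
    with agree have "take (length v) w = v"
      by (intro nth_equalityI) auto
    then show "\<exists>z. w = v @ z" by (metis append_take_drop_id)
  qed (auto simp: nth_append)
  then show ?thesis
    using Fin by (auto simp: prefix_cyl_def split: if_splits)
qed (simp add: prefix_cyl_def)

lemma seq_of_word_in_prefix_cyl_None:
  "seq_of_word x \<in> prefix_cyl (map Some w @ [None]) \<longleftrightarrow> x = Fin w"
  by (cases x) (auto simp: prefix_cyl_snoc seq_of_word_in_prefix_cyl)

lemma Cinf_snoc: "Cinf (u @ [a]) = {x \<in> Cinf u. seq_of_word x (length u) = Some a}"
  using seq_of_word_in_prefix_cyl[of _ "u @ [a]"]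
  by (auto simp: prefix_cyl_snoc seq_of_word_in_prefix_cyl)

lemma singleton_Fin_eq: "{Fin u} = {x \<in> Cinf u. seq_of_word x (length u) = None}"
  using seq_of_word_in_prefix_cyl_None[of _ u]
  by (auto simp: prefix_cyl_snoc seq_of_word_in_prefix_cyl)

lemma Cinf_eq_insert_children: "Cinf u = insert (Fin u) (\<Union>a. Cinf (u @ [a]))"
  using singleton_Fin_eq[of u] by (auto simp: Cinf_snoc)

lemma disjoint_Cinf_children: "a \<noteq> b \<Longrightarrow> Cinf (u @ [a]) \<inter> Cinf (u @ [b]) = {}"
  by (auto simp: Cinf_snoc)

lemma Cinf_subset_Cinf_iff: "Cinf v \<subseteq> Cinf w \<longleftrightarrow> (\<exists>z. v = w @ z)"
proof
  assume "Cinf v \<subseteq> Cinf w"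
  moreover have "Fin v \<in> Cinf v" by simp
  ultimately have "Fin v \<in> Cinf w" by blast
  then show "\<exists>z. v = w @ z" by simp
next
  assume "\<exists>z. v = w @ z"
  then obtain z where "v = w @ z" by blast
  then show "Cinf v \<subseteq> Cinf w"
    by (auto simp: Cinf_def elim!: fprefix.elims) (auto simp: nth_append)
qed

lemma Sinf_subset_Cinf_cases:
  assumes "X \<in> Sinf" "X \<subseteq> Cinf u" "X \<noteq> {}"
  shows "X = {Fin u} \<or> X = Cinf u \<or> (\<exists>a. X \<subseteq> Cinf (u @ [a]))"
proof -
  from assms(1,3) obtain w where "X = {Fin w} \<or> X = Cinf w"
    unfolding Sinf_iff by blast
  moreover from this assms(2) obtain z where "w = u @ z"
    by (auto simp: Cinf_subset_Cinf_iff)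
  ultimately show ?thesis
    by (cases z) (auto simp: Cinf_subset_Cinf_iff)
qed

definition Sinf_partition :: "'a infword set set \<Rightarrow> 'a infword set \<Rightarrow> bool" where
  "Sinf_partition P S \<longleftrightarrow> finite P \<and> P \<subseteq> Sinf \<and> {} \<notin> P \<and> disjoint P \<and> \<Union>P = S"

definition pieces_within :: "'a infword set set \<Rightarrow> 'a list \<Rightarrow> 'a infword set set" where
  "pieces_within P w = {X \<in> P. X \<subseteq> Cinf w}"

lemma pieces_within_subset: "pieces_within P w \<subseteq> P"
  by (auto simp: pieces_within_def)

lemma Sinf_partition_Cinf_trivial:
  assumes P: "Sinf_partition P (Cinf u)" and "Cinf u \<in> P"
  shows "P = {Cinf u}"
proof -
  have "X = Cinf u" if X: "X \<in> P" for X
  proof (rule ccontr)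
    assume "X \<noteq> Cinf u"
    then have "X \<inter> Cinf u = {}"
      using P X \<open>Cinf u \<in> P\<close> unfolding Sinf_partition_def by (meson disjnt_def pairwiseD)
    moreover have "X \<subseteq> Cinf u" "X \<noteq> {}"
      using P X unfolding Sinf_partition_def by auto
    ultimately show False by blast
  qed
  with \<open>Cinf u \<in> P\<close> show ?thesis by blast
qed

lemma Fin_notin_pieces_within_child: "Y \<in> pieces_within P (u @ [a]) \<Longrightarrow> Fin u \<notin> Y"
  by (auto simp: pieces_within_def Cinf_snoc)

lemma Sinf_partition_Cinf_split:
  assumes P: "Sinf_partition P (Cinf u)" and "Cinf u \<notin> P"
  shows "P = insert {Fin u} (\<Union>a. pieces_within P (u @ [a]))"
proof -
  have piece_cases: "X = {Fin u} \<or> (\<exists>a. X \<in> pieces_within P (u @ [a]))" if X: "X \<in> P" for X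
  proof -
    have "X \<in> Sinf" "X \<subseteq> Cinf u" "X \<noteq> {}"
      using P X unfolding Sinf_partition_def by auto
    then show ?thesis
      using Sinf_subset_Cinf_cases \<open>Cinf u \<notin> P\<close> X unfolding pieces_within_def by blast
  qed
  have "Fin u \<in> \<Union>P" using P unfolding Sinf_partition_def by simp
  then obtain X where X: "X \<in> P" "Fin u \<in> X" by blast
  then have "{Fin u} \<in> P"
    using piece_cases[OF X(1)] by (auto dest: Fin_notin_pieces_within_child)
  show ?thesis
  proof (intro equalityI subsetI)
    fix X assume "X \<in> P"
    then show "X \<in> insert {Fin u} (\<Union>a. pieces_within P (u @ [a]))" using piece_cases by blast
  qed (use \<open>{Fin u} \<in> P\<close> in \<open>auto simp: pieces_within_def\<close>)
qed

lemma Sinf_partition_pieces_within_child: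
  assumes P: "Sinf_partition P (Cinf u)" and "Cinf u \<notin> P"
  shows "Sinf_partition (pieces_within P (u @ [a])) (Cinf (u @ [a]))"
proof -
  have "\<Union>(pieces_within P (u @ [a])) = Cinf (u @ [a])"
  proof (intro equalityI subsetI)
    fix x assume x: "x \<in> Cinf (u @ [a])"
    then have "x \<in> \<Union>P"
      using P Cinf_eq_insert_children[of u] unfolding Sinf_partition_def by blast
    then obtain X where X: "X \<in> P" "x \<in> X" by blast
    moreover have "x \<noteq> Fin u" using x by (auto simp: Cinf_snoc)
    ultimately obtain b where b: "X \<in> pieces_within P (u @ [b])"
      using Sinf_partition_Cinf_split[OF assms] by blast
    then have "x \<in> Cinf (u @ [b])" using X(2) unfolding pieces_within_def by blast
    then have "a = b" using x by (simp add: Cinf_snoc)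
    then show "x \<in> \<Union>(pieces_within P (u @ [a]))" using X(2) b by blast
  qed (auto simp: pieces_within_def)
  moreover have sub: "pieces_within P (u @ [a]) \<subseteq> P" by (rule pieces_within_subset)
  moreover have "finite P" "P \<subseteq> Sinf" "{} \<notin> P" "disjoint P"
    using P unfolding Sinf_partition_def by auto
  ultimately show ?thesis
    unfolding Sinf_partition_def by (auto intro: finite_subset pairwise_subset)
qed

lemma disjoint_pieces_within_children:
  assumes "{} \<notin> P" "a \<noteq> b"
  shows "pieces_within P (u @ [a]) \<inter> pieces_within P (u @ [b]) = {}"
proof -
  have "X = {}" if "X \<in> pieces_within P (u @ [a])" "X \<in> pieces_within P (u @ [b])" for X
  proof -
    have "X \<subseteq> Cinf (u @ [a]) \<inter> Cinf (u @ [b])"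
      using that unfolding pieces_within_def by blast
    then show ?thesis by (simp add: disjoint_Cinf_children[OF \<open>a \<noteq> b\<close>])
  qed
  then show ?thesis using assms(1) pieces_within_subset by blast
qed

lemma Sinf_partition_Cinf_additive:
  fixes \<mu> :: "('a::finite) infword set \<Rightarrow> ennreal"
  assumes local: "\<And>u. \<mu> (Cinf u) = \<mu> {Fin u} + (\<Sum>a\<in>UNIV. \<mu> (Cinf (u @ [a])))"
  shows "Sinf_partition P (Cinf u) \<Longrightarrow> \<mu> (Cinf u) = (\<Sum>X\<in>P. \<mu> X)"
proof (induction "card P" arbitrary: P u rule: less_induct)
  case less
  note P = less.prems
  show ?case
  proof (cases "Cinf u \<in> P")
    case True
    then show ?thesis using Sinf_partition_Cinf_trivial[OF P] by simp
  next
    case False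
    let ?child = "\<lambda>a. pieces_within P (u @ [a])"
    have fin: "finite P" and "{} \<notin> P" using P unfolding Sinf_partition_def by blast+
    have P_eq: "P = insert {Fin u} (\<Union>a. ?child a)"
      using Sinf_partition_Cinf_split[OF P False] .
    have Fin_notin: "{Fin u} \<notin> (\<Union>a. ?child a)"
      by (auto dest: Fin_notin_pieces_within_child)
    have "\<mu> (Cinf (u @ [a])) = (\<Sum>X\<in>?child a. \<mu> X)" for a
    proof (rule less.hyps)
      have "?child a \<subseteq> P - {{Fin u}}"
        using Fin_notin pieces_within_subset by blast
      then have "card (?child a) \<le> card (P - {{Fin u}})"
        using fin by (intro card_mono) simp_all
      also have "\<dots> < card P"
        using fin P_eq by (intro card_Diff1_less) auto
      finally show "card (?child a) < card P" .
    qed (rule Sinf_partition_pieces_within_child[OF P False])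
    moreover have "(\<Sum>X\<in>(\<Union>a. ?child a). \<mu> X) = (\<Sum>a\<in>UNIV. \<Sum>X\<in>?child a. \<mu> X)"
      using fin \<open>{} \<notin> P\<close> pieces_within_subset
      by (intro sum.UNION_disjoint) (auto intro: finite_subset simp: disjoint_pieces_within_children)
    moreover have "finite (\<Union>a. ?child a)"
      using fin pieces_within_subset by (meson UN_least finite_subset)
    ultimately show ?thesis
      using Fin_notin by (subst P_eq) (simp add: local[of u])
  qed
qed

lemma finite_partition_Sinf_additive:
  fixes \<mu> :: "('a::finite) infword set \<Rightarrow> ennreal"
  assumes "\<mu> {} = 0"
    and local: "\<And>u. \<mu> (Cinf u) = \<mu> {Fin u} + (\<Sum>a\<in>UNIV. \<mu> (Cinf (u @ [a])))"
    and P: "finite P" "P \<subseteq> Sinf" "{} \<notin> P" "disjoint P" "\<Union>P \<in> Sinf"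
  shows "\<mu> (\<Union>P) = (\<Sum>X\<in>P. \<mu> X)"
proof -
  from P(5) consider "\<Union>P = {}" | u where "\<Union>P = {Fin u}" | u where "\<Union>P = Cinf u"
    unfolding Sinf_iff by blast
  then show ?thesis
  proof cases
    case 1
    then have "P = {}" using P(3) by auto
    then show ?thesis using assms(1) by simp
  next
    case (2 u)
    have "X = {Fin u}" if "X \<in> P" for X
      using that 2 P(3) by (metis Union_upper subset_singleton_iff)
    moreover have "P \<noteq> {}" using 2 by auto
    ultimately have "P = {{Fin u}}" by blast
    then show ?thesis by simp
  next
    case (3 u)
    then show ?thesis
      using Sinf_partition_Cinf_additive[OF local] P unfolding Sinf_partition_def by simp
  qed
qed

definition option_seq_topology :: "(nat \<Rightarrow> 'a option) topology" where
  "option_seq_topology = product_topology (\<lambda>_. discrete_topology UNIV) UNIV"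

lemma topspace_option_seq_topology [simp]: "topspace option_seq_topology = UNIV"
  by (simp add: option_seq_topology_def)

lemma compact_space_option_seq_topology:
  "compact_space (option_seq_topology :: (nat \<Rightarrow> 'a::finite option) topology)"
  by (simp add: option_seq_topology_def compact_space_product_topology compact_space_discrete_topology)

lemma clopen_coordinate:
  "openin option_seq_topology {g. g i \<in> C}" "closedin option_seq_topology {g. g i \<in> C}"
proof -
  have "continuous_map option_seq_topology (discrete_topology UNIV) (\<lambda>g. g i)"
    unfolding option_seq_topology_def by (rule continuous_map_product_projection) simp
  then show "openin option_seq_topology {g. g i \<in> C}" "closedin option_seq_topology {g. g i \<in> C}"
    using openin_continuous_map_preimage closedin_continuous_map_preimage by fastforce+
qed

lemma clopen_prefix_cyl:
  "openin option_seq_topology (prefix_cyl xs) \<and> closedin option_seq_topology (prefix_cyl xs)"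
proof (induction xs rule: rev_induct)
  case Nil
  have "prefix_cyl [] = topspace option_seq_topology" by (simp add: prefix_cyl_def)
  then show ?case by (metis openin_topspace closedin_topspace)
next
  case (snoc c xs)
  then show ?case
    using clopen_coordinate[of "length xs" "{c}"] by (auto simp: prefix_cyl_snoc)
qed

lemma range_seq_of_word: "range seq_of_word = {g. \<forall>i. g i = None \<longrightarrow> g (Suc i) = None}"
proof (intro equalityI subsetI)
  fix g :: "nat \<Rightarrow> 'a option" assume "g \<in> range seq_of_word"
  then obtain x where "g = seq_of_word x" by blast
  then show "g \<in> {g. \<forall>i. g i = None \<longrightarrow> g (Suc i) = None}" by (cases x) auto
next
  fix g :: "nat \<Rightarrow> 'a option" assume "g \<in> {g. \<forall>i. g i = None \<longrightarrow> g (Suc i) = None}"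
  then have stays_None: "g i = None \<Longrightarrow> g (Suc i) = None" for i by blast
  show "g \<in> range seq_of_word"
  proof (cases "\<exists>n. g n = None")
    case False
    then have "g = seq_of_word (Inf (the \<circ> g))" by fastforce
    then show ?thesis by blast
  next
    case True
    define n where "n = (LEAST n. g n = None)"
    have "g i = None" if "n \<le> i" for i
      using that
    proof (induction rule: dec_induct)
      case base then show ?case unfolding n_def using True by (rule LeastI_ex)
    qed (use stays_None in blast)
    moreover have "g i \<noteq> None" if "i < n" for i
      using that unfolding n_def by (rule not_less_Least)
    ultimately have "g = seq_of_word (Fin (map (the \<circ> g) [0..<n]))"
      by (fastforce simp: not_less)
    then show ?thesis by blast
  qed
qed

lemma closedin_range_seq_of_word: "closedin option_seq_topology (range seq_of_word)"
proof -
  have "range seq_of_word = (\<Inter>i. {g. g i \<in> - {None}} \<union> {g. g (Suc i) \<in> {None}})"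
    unfolding range_seq_of_word by (auto; metis option.distinct(1))
  also have "closedin option_seq_topology \<dots>"
    by (intro closedin_INT closedin_Un clopen_coordinate) auto
  finally show ?thesis .
qed

lemma Sinf_eq_vimage_openin:
  assumes "S \<in> Sinf"
  obtains U where "openin option_seq_topology U" "S = seq_of_word -` U"
proof -
  from assms consider "S = {}" | w where "S = {Fin w}" | w where "S = Cinf w"
    unfolding Sinf_iff by blast
  then show ?thesis
  proof cases
    case 1
    then show ?thesis using that[of "{}"] by simp
  next
    case (2 w)
    have "seq_of_word -` prefix_cyl (map Some w @ [None]) = {Fin w}"
      using seq_of_word_in_prefix_cyl_None by blast
    then show ?thesis using that[OF clopen_prefix_cyl[THEN conjunct1]] 2 by metis
  next
    case (3 w)
    have "seq_of_word -` prefix_cyl (map Some w) = Cinf w"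
      using seq_of_word_in_prefix_cyl by blast
    then show ?thesis using that[OF clopen_prefix_cyl[THEN conjunct1]] 3 by metis
  qed
qed

lemma compactin_image_Sinf:
  fixes S :: "('a::finite) infword set"
  assumes "S \<in> Sinf"
  shows "compactin option_seq_topology (seq_of_word ` S)"
proof -
  from assms consider "S = {}" | w where "S = {Fin w}" | w where "S = Cinf w"
    unfolding Sinf_iff by blast
  then show ?thesis
  proof cases
    case (3 w)
    then have "seq_of_word ` S = prefix_cyl (map Some w) \<inter> range seq_of_word"
      by (auto simp flip: seq_of_word_in_prefix_cyl)
    then show ?thesis
      by (metis closedin_Int clopen_prefix_cyl[THEN conjunct2] closedin_range_seq_of_word
          closedin_compact_space compact_space_option_seq_topology)
  qed auto
qed

lemma finite_nonempty_of_disjoint_Sinf_family: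
  fixes A :: "nat \<Rightarrow> ('a::finite) infword set"
  assumes range: "range A \<subseteq> Sinf" and disj: "disjoint_family A" and union: "(\<Union>i. A i) \<in> Sinf"
  shows "finite {n. A n \<noteq> {}}"
proof -
  have "\<exists>U. openin option_seq_topology U \<and> A n = seq_of_word -` U" for n
    using range by (meson Sinf_eq_vimage_openin rangeI subsetD)
  then obtain U where U: "\<And>n. openin option_seq_topology (U n)" "\<And>n. A n = seq_of_word -` U n"
    by metis
  have compact: "compactin option_seq_topology (seq_of_word ` (\<Union>i. A i))"
    using union by (rule compactin_image_Sinf)
  have cover: "seq_of_word ` (\<Union>i. A i) \<subseteq> \<Union>(range U)"
    using U(2) by auto
  have "openin option_seq_topology V" if "V \<in> range U" for V
    using that U(1) by blast
  then obtain \<F> where \<F>: "finite \<F>" "\<F> \<subseteq> range U" "seq_of_word ` (\<Union>i. A i) \<subseteq> \<Union>\<F>"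
    using compactinD[OF compact _ cover] by metis
  obtain N where N: "finite N" "\<F> = U ` N"
    using finite_subset_image[OF \<F>(1,2)] by blast
  have "{n. A n \<noteq> {}} \<subseteq> N"
  proof
    fix n assume "n \<in> {n. A n \<noteq> {}}"
    then obtain x where x: "x \<in> A n" by blast
    then obtain m where "m \<in> N" "seq_of_word x \<in> U m" using \<F>(3) N(2) by blast
    then have "x \<in> A m" using U(2) by blast
    with x disj have "m = n" by (auto simp: disjoint_family_on_def)
    with \<open>m \<in> N\<close> show "n \<in> N" by simp
  qed
  then show ?thesis using N(1) by (rule finite_subset)
qed


lemma Cinf_additive_if_countably_additive:
  fixes \<mu> :: "('a::finite) infword set \<Rightarrow> ennreal"
  assumes ca: "countably_additive Sinf \<mu>" and "\<mu> {} = 0"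
  shows "\<mu> (Cinf u) = \<mu> {Fin u} + (\<Sum>a\<in>UNIV. \<mu> (Cinf (u @ [a])))"
proof -
  define F where "F i = (case i of None \<Rightarrow> {Fin u} | Some a \<Rightarrow> Cinf (u @ [a]))" for i
  have union: "(\<Union>i. F i) = Cinf u"
    by (subst Cinf_eq_insert_children) (auto simp: F_def split: option.splits)
  have disj: "disjoint_family F"
    unfolding disjoint_family_on_def F_def
    by (auto simp: Cinf_snoc disjoint_Cinf_children split: option.splits)
  have "\<mu> (\<Union>i. F i) = (\<Sum>i\<in>UNIV. \<mu> (F i))"
  proof (rule countably_additive_finite_family[OF ca \<open>\<mu> {} = 0\<close>])
    show "F ` UNIV \<subseteq> Sinf" by (auto simp: Sinf_def F_def split: option.splits)
    show "(\<Union>i. F i) \<in> Sinf" by (auto simp: Sinf_def union)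
  qed (simp_all add: disj Sinf_def)
  also have "\<dots> = \<mu> {Fin u} + (\<Sum>a\<in>UNIV. \<mu> (Cinf (u @ [a])))"
    by (simp add: UNIV_option_conv sum.reindex F_def)
  finally show ?thesis by (simp add: union)
qed

theorem mainTheorem11:
  fixes \<mu> :: "('a::finite) infword set \<Rightarrow> ennreal"
  assumes "\<mu> {} = 0"
  shows "countably_additive Sinf \<mu> \<longleftrightarrow>
    (\<forall>u. \<mu> (Cinf u) = \<mu> {Fin u} + (\<Sum>a\<in>UNIV. \<mu> (Cinf (u @ [a]))))"
proof
  assume "countably_additive Sinf \<mu>"
  then show "\<forall>u. \<mu> (Cinf u) = \<mu> {Fin u} + (\<Sum>a\<in>UNIV. \<mu> (Cinf (u @ [a])))"
    using Cinf_additive_if_countably_additive assms by blast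
next
  assume "\<forall>u. \<mu> (Cinf u) = \<mu> {Fin u} + (\<Sum>a\<in>UNIV. \<mu> (Cinf (u @ [a])))"
  then show "countably_additive Sinf \<mu>"
    using assms finite_nonempty_of_disjoint_Sinf_family finite_partition_Sinf_additive
    by (intro countably_additiveI_finite_support) auto
qed

end
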